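(* Let $\mathbf{D}=[\mathbf{B}\ \mathbf{A}]\mathbf{T}\in\mathbb{R}^{M_1\times M_2}$ follow Data Model 1 (context), with unit $\ell_2$-norm columns. Let $\mathbf{d}$ be one of the columns of $\mathbf{B}$, let $\hat{\mathbf{c}}$ be the optimal point of $$\min_{\mathbf{c}}\|\mathbf{c}^T\mathbf{D}\|_1\ \text{ s.t. }\ \mathbf{c}^T\mathbf{d}=1,\ \mathbf{c}\in\mathcal{U}^\perp,$$ let $\mathcal{I}_0=\{i\in[M_2]:\hat{\mathbf{c}}^T\mathbf{d}_i=0,\ \mathbf{d}_i\text{ a column of }\mathbf{B}\}$, $\mathbf{d}^\perp=(\mathbf{I}-\mathbf{U}\mathbf{U}^T)\mathbf{d}/\|(\mathbf{I}-\mathbf{U}\mathbf{U}^T)\mathbf{d}\|_2$, and $\mathbf{o}=\sum_{\mathbf{d}_i\in\mathbf{B}}\mathrm{sgn}(\hat{\mathbf{c}}^T\mathbf{d}_i)\,\mathbf{d}_i$. If $$\frac12\inf_{\boldsymbol\delta\in\mathcal{U},\|\boldsymbol\delta\|_2=1}\sum_{\mathbf{d}_i\in\mathbf{A}}|\boldsymbol\delta^T\mathbf{d}_i|>\sup_{\boldsymbol\delta\in\mathcal{U},\|\boldsymbol\delta\|=1}\sum_{\mathbf{d}_i\in\mathbf{B},\,i\in\mathcal{I}_0}|\boldsymbol\delta^T\mathbf{d}_i|+\|\mathbf{U}^T\mathbf{o}\|_2$$ and $$\inf_{\boldsymbol\delta\in\mathcal{U},\|\boldsymbol\delta\|_2=1}\sum_{\mathbf{d}_i\in\mathbf{A}}|\boldsymbol\delta^T\mathbf{d}_i|>\frac{2\|\mathbf{d}^T\mathbf{U}\|_2}{\sqrt{1-\|\mathbf{d}^T\mathbf{U}\|_2^2}}\Big(\mathbf{o}^T\mathbf{d}^\perp+\sum_{\mathbf{d}_i\in\mathbf{B},\,i\in\mathcal{I}_0}|\mathbf{d}_i^T\mathbf{d}^\perp|\Big),$$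 then $$\arg\min_{\mathbf{c}\in\mathcal{U}^\perp,\ \mathbf{d}^T\mathbf{c}=1}\|\mathbf{c}^T\mathbf{D}\|_1=\arg\min_{\mathbf{d}^T\mathbf{c}=1}\|\mathbf{c}^T\mathbf{D}\|_1 .$$
   Context: Data Model 1: $\mathbf{D}=[\mathbf{B}\ \mathbf{A}]\mathbf{T}$, where $\mathbf{T}$ is a permutation matrix, $\mathbf{A}\in\mathbb{R}^{M_1\times n_i}$ has columns (inliers) lying in an $r$-dimensional subspace $\mathcal{U}$ with orthonormal basis $\mathbf{U}\in\mathbb{R}^{M_1\times r}$, and $\mathbf{B}\in\mathbb{R}^{M_1\times n_o}$ has columns (outliers) not lying in $\mathcal{U}$. The columns of $\mathbf{D}$ are $\mathbf{d}_1,\dots,\mathbf{d}_{M_2}$; "$\mathbf{d}_i\in\mathbf{A}$" ("$\in\mathbf{B}$") means $\mathbf{d}_i$ is a column of $\mathbf{A}$ (of $\mathbf{B}$). $\mathcal{U}^\perp$ is the orthogonal complement of $\mathcal{U}$. *)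

theory Defs
  imports "HOL-Analysis.Analysis"
begin

definition l1obj :: "real^'n^'m \<Rightarrow> real^'m \<Rightarrow> real" where
  "l1obj D c = (\<Sum>i\<in>UNIV. \<bar>c \<bullet> column i D\<bar>)"

definition colspace :: "real^'r^'m \<Rightarrow> (real^'m) set" where
  "colspace U = range (\<lambda>x. U *v x)"

definition perpspace :: "real^'r^'m \<Rightarrow> (real^'m) set" where
  "perpspace U = {c. \<forall>u\<in>colspace U. c \<bullet> u = 0}"

definition argmin_set :: "('a \<Rightarrow> bool) \<Rightarrow> ('a \<Rightarrow> real) \<Rightarrow> 'a set" where
  "argmin_set P f = {c. P c \<and> (\<forall>c'. P c' \<longrightarrow> f c \<le> f c')}"

end

theory Submission
  imports Defs
begin

text \<open>Let F be the optimal value of the problem restricted to U-perp. Optimality of c_hat along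
  the feasible directions inside U-perp shows that the one-sided directional derivative of the
  objective at c_hat, which on U-perp equals o.x + sum over I0 of |x.d_i|, is at least (d.x) F.
  At x = d_perp, where d.x = sqrt (1 - ||U^T d||^2), the second condition turns this into
  ||U^T d|| F < inf / 2.
  A feasible c outside U-perp splits as c = x + delta with x in U-perp and delta a nonzero vector
  of U. The inliers only see delta and contribute at least ||delta|| inf. On the outliers the
  objective is at least the directional derivative at x, which is at least
  (1 - d.delta) F >= F - ||delta|| ||U^T d|| F, minus ||delta|| (sup + ||U^T o||). Together with
  the first condition the gain outweighs the loss, so c is strictly worse than c_hat.\<close>

declare transpose_matrix_vector [simp del]

lemma inner_matrix_vector_mult_transpose:
  fixes U :: "real^'r^'m"
  shows "(U *v y) \<bullet> v = y \<bullet> (transpose U *v v)"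
  by (metis dot_lmul_matrix inner_commute transpose_matrix_vector)

lemma transpose_mult_orthonormal_cols:
  fixes U :: "real^'r^'m"
  assumes "transpose U ** U = mat 1"
  shows "transpose U *v (U *v y) = y"
  by (simp add: matrix_vector_mul_assoc assms)

lemma norm_mult_orthonormal_cols:
  fixes U :: "real^'r^'m"
  assumes "transpose U ** U = mat 1"
  shows "norm (U *v y) = norm y"
  by (simp add: norm_eq_sqrt_inner inner_matrix_vector_mult_transpose
      transpose_mult_orthonormal_cols[OF assms])

lemma perpspace_iff:
  fixes U :: "real^'r^'m"
  shows "c \<in> perpspace U \<longleftrightarrow> transpose U *v c = 0"
proof
  assume "c \<in> perpspace U"
  then have "(U *v (transpose U *v c)) \<bullet> c = 0"
    by (auto simp: perpspace_def colspace_def inner_commute)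
  then have "(transpose U *v c) \<bullet> (transpose U *v c) = 0"
    by (simp only: inner_matrix_vector_mult_transpose)
  then show "transpose U *v c = 0"
    by (simp only: inner_eq_zero_iff)
next
  assume "transpose U *v c = 0"
  then have "(U *v y) \<bullet> c = 0" for y
    by (simp only: inner_matrix_vector_mult_transpose inner_zero_right)
  then show "c \<in> perpspace U"
    by (auto simp: perpspace_def colspace_def inner_commute)
qed

lemma subspace_perpspace: "subspace (perpspace U)"
proof -
  have "perpspace U = {c. \<forall>u\<in>colspace U. orthogonal u c}"
    by (auto simp: perpspace_def orthogonal_def inner_commute)
  then show ?thesis by (simp add: subspace_orthogonal_to_vectors)
qed

lemma subspace_colspace: "subspace (colspace U)"
  unfolding colspace_def by (intro linear_subspace_image subspace_UNIV matrix_vector_mul_linear)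

lemma residual_in_perpspace:
  fixes U :: "real^'r^'m"
  assumes "transpose U ** U = mat 1"
  shows "x - U *v (transpose U *v x) \<in> perpspace U"
  by (simp add: perpspace_iff matrix_vector_mult_diff_distrib transpose_mult_orthonormal_cols[OF assms])

lemma abs_inner_mult_orthonormal_cols_le:
  fixes U :: "real^'r^'m"
  assumes "transpose U ** U = mat 1"
  shows "\<bar>v \<bullet> (U *v q)\<bar> \<le> norm (U *v q) * norm (transpose U *v v)"
  using Cauchy_Schwarz_ineq2[of q "transpose U *v v"]
  by (simp add: inner_commute[of v] inner_matrix_vector_mult_transpose norm_mult_orthonormal_cols[OF assms])

lemma
  fixes U :: "real^'r^'m" and x :: "real^'m"
  assumes "transpose U ** U = mat 1"
  defines "r \<equiv> x - U *v (transpose U *v x)"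
  shows norm_residual_sq: "norm r ^ 2 = norm x ^ 2 - norm (transpose U *v x) ^ 2"
    and inner_residual: "x \<bullet> r = norm r ^ 2"
proof -
  have perp: "(U *v (transpose U *v x)) \<bullet> r = 0"
    using residual_in_perpspace[OF assms(1), of x]
    by (simp add: r_def perpspace_def colspace_def inner_commute)
  have decomp: "x = r + U *v (transpose U *v x)" by (simp add: r_def)
  show "x \<bullet> r = norm r ^ 2"
    using perp by (subst decomp) (simp add: inner_add_left inner_add_right inner_commute power2_norm_eq_inner)
  have "norm x ^ 2 = norm r ^ 2 + norm (U *v (transpose U *v x)) ^ 2"
    using perp by (subst decomp) (simp add: power2_norm_eq_inner inner_add_left inner_add_right inner_commute)
  then show "norm r ^ 2 = norm x ^ 2 - norm (transpose U *v x) ^ 2"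
    by (simp add: norm_mult_orthonormal_cols[OF assms(1)])
qed

definition unit_residual :: "real^'r^'m \<Rightarrow> real^'m \<Rightarrow> real^'m" where
  "unit_residual U d = (1 / norm (d - U *v (transpose U *v d))) *\<^sub>R (d - U *v (transpose U *v d))"

lemma
  fixes U :: "real^'r^'m"
  assumes orth: "transpose U ** U = mat 1" and "norm d = 1" and "d \<notin> colspace U"
  shows unit_residual_in_perpspace: "unit_residual U d \<in> perpspace U"
    and inner_unit_residual: "d \<bullet> unit_residual U d = sqrt (1 - norm (transpose U *v d) ^ 2)"
    and sqrt_one_minus_norm_transpose_pos: "sqrt (1 - norm (transpose U *v d) ^ 2) > 0"
proof -
  define r where "r = d - U *v (transpose U *v d)"
  have "r \<in> perpspace U"
    unfolding r_def by (rule residual_in_perpspace[OF orth])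
  then show "unit_residual U d \<in> perpspace U"
    by (simp add: unit_residual_def r_def[symmetric] subspace_scale[OF subspace_perpspace])
  have "r \<noteq> 0"
    using \<open>d \<notin> colspace U\<close> by (auto simp: r_def colspace_def)
  have norm_r: "norm r = sqrt (1 - norm (transpose U *v d) ^ 2)"
    using norm_residual_sq[OF orth, of d] \<open>norm d = 1\<close> by (simp add: r_def real_sqrt_unique)
  have "d \<bullet> r = norm r ^ 2"
    unfolding r_def by (rule inner_residual[OF orth])
  then have "d \<bullet> unit_residual U d = norm r"
    using \<open>r \<noteq> 0\<close> by (simp add: unit_residual_def r_def[symmetric] power2_eq_square)
  then show "d \<bullet> unit_residual U d = sqrt (1 - norm (transpose U *v d) ^ 2)"
    by (simp only: norm_r)
  show "sqrt (1 - norm (transpose U *v d) ^ 2) > 0"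
    using \<open>r \<noteq> 0\<close> by (simp add: norm_r[symmetric])
qed

definition l1_Inf_sphere :: "real^'n^'m \<Rightarrow> 'n set \<Rightarrow> (real^'m) set \<Rightarrow> real" where
  "l1_Inf_sphere D A V = Inf ((\<lambda>\<delta>. \<Sum>i\<in>A. \<bar>\<delta> \<bullet> column i D\<bar>) ` {\<delta>\<in>V. norm \<delta> = 1})"

definition l1_Sup_sphere :: "real^'n^'m \<Rightarrow> 'n set \<Rightarrow> (real^'m) set \<Rightarrow> real" where
  "l1_Sup_sphere D A V = Sup ((\<lambda>\<delta>. \<Sum>i\<in>A. \<bar>\<delta> \<bullet> column i D\<bar>) ` {\<delta>\<in>V. norm \<delta> = 1})"

lemma norm_mult_l1_Inf_sphere_le:
  assumes "subspace V" "x \<in> V"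
  shows "norm x * l1_Inf_sphere D A V \<le> (\<Sum>i\<in>A. \<bar>x \<bullet> column i D\<bar>)"
proof (cases "x = 0")
  case False
  define u where "u = inverse (norm x) *\<^sub>R x"
  have "u \<in> V" "norm u = 1"
    using assms False by (simp_all add: u_def subspace_scale)
  then have "l1_Inf_sphere D A V \<le> (\<Sum>i\<in>A. \<bar>u \<bullet> column i D\<bar>)"
    unfolding l1_Inf_sphere_def by (intro cInf_lower bdd_belowI[of _ 0]) (auto intro: sum_nonneg)
  moreover have "(\<Sum>i\<in>A. \<bar>x \<bullet> column i D\<bar>) = norm x * (\<Sum>i\<in>A. \<bar>u \<bullet> column i D\<bar>)"
    using False by (simp add: u_def abs_mult sum_distrib_left mult.assoc[symmetric])
  ultimately show ?thesis by (simp add: mult_left_mono)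
qed simp

lemma sum_abs_le_norm_mult_l1_Sup_sphere:
  assumes "subspace V" "x \<in> V"
  shows "(\<Sum>i\<in>A. \<bar>x \<bullet> column i D\<bar>) \<le> norm x * l1_Sup_sphere D A V"
proof (cases "x = 0")
  case False
  define u where "u = inverse (norm x) *\<^sub>R x"
  have "u \<in> V" "norm u = 1"
    using assms False by (simp_all add: u_def subspace_scale)
  moreover have "(\<Sum>i\<in>A. \<bar>w \<bullet> column i D\<bar>) \<le> (\<Sum>i\<in>A. norm (column i D))" if "norm w = 1" for w
    by (rule sum_mono) (use Cauchy_Schwarz_ineq2[of w] that in simp)
  ultimately have "(\<Sum>i\<in>A. \<bar>u \<bullet> column i D\<bar>) \<le> l1_Sup_sphere D A V"
    unfolding l1_Sup_sphere_def
    by (intro cSup_upper bdd_aboveI[of _ "\<Sum>i\<in>A. norm (column i D)"]) auto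
  moreover have "(\<Sum>i\<in>A. \<bar>x \<bullet> column i D\<bar>) = norm x * (\<Sum>i\<in>A. \<bar>u \<bullet> column i D\<bar>)"
    using False by (simp add: u_def abs_mult sum_distrib_left mult.assoc[symmetric])
  ultimately show ?thesis by (simp add: mult_left_mono)
qed simp

lemma argmin_set_eq_if_strict_outside:
  assumes "x \<in> argmin_set (\<lambda>c. P c \<and> Q c) f"
    and "\<And>c. P c \<Longrightarrow> \<not> Q c \<Longrightarrow> f x < f c"
  shows "argmin_set (\<lambda>c. P c \<and> Q c) f = argmin_set P f"
proof -
  have "P x" "Q x" "\<And>c. P c \<Longrightarrow> f x \<le> f c"
    using assms unfolding argmin_set_def by (auto intro: less_imp_le)
  then show ?thesis
    using assms(2) unfolding argmin_set_def by (auto intro: order.trans) (meson not_le)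
qed

lemma eventually_abs_add_mult_at_right:
  fixes a b :: real
  shows "eventually (\<lambda>t. \<bar>a + t * b\<bar> = \<bar>a\<bar> + t * (if a = 0 then \<bar>b\<bar> else sgn a * b)) (at_right 0)"
proof -
  have lim: "((\<lambda>t. a + t * b) \<longlongrightarrow> a) (at_right 0)"
    by (auto intro!: tendsto_eq_intros)
  consider (pos) "a > 0" | (neg) "a < 0" | (zero) "a = 0" by linarith
  then show ?thesis
  proof cases
    case pos
    from order_tendstoD(1)[OF lim pos] show ?thesis
      by eventually_elim (use pos in auto)
  next
    case neg
    from order_tendstoD(2)[OF lim neg] show ?thesis
      by eventually_elim (use neg in auto)
  next
    case zero
    from eventually_at_right_less[of 0] show ?thesis
      by eventually_elim (simp add: zero abs_mult)
  qed
qed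

definition l1_dir_deriv :: "real^'n^'m \<Rightarrow> 'n set \<Rightarrow> real^'m \<Rightarrow> real^'m \<Rightarrow> real" where
  "l1_dir_deriv D S c x = (\<Sum>i\<in>S. if c \<bullet> column i D = 0 then \<bar>x \<bullet> column i D\<bar>
                                  else sgn (c \<bullet> column i D) * (x \<bullet> column i D))"

text \<open>For S the outlier indices and c = c_hat, these are the vector o and the index set I0.\<close>

definition sgn_col_sum :: "real^'n^'m \<Rightarrow> 'n set \<Rightarrow> real^'m \<Rightarrow> real^'m" where
  "sgn_col_sum D S c = (\<Sum>i\<in>S. sgn (c \<bullet> column i D) *\<^sub>R column i D)"

definition zero_cols :: "real^'n^'m \<Rightarrow> 'n set \<Rightarrow> real^'m \<Rightarrow> 'n set" where
  "zero_cols D S c = {i\<in>S. c \<bullet> column i D = 0}"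

lemma eventually_l1obj_add_scaleR:
  "eventually (\<lambda>t. l1obj D (c + t *\<^sub>R x) = l1obj D c + t * l1_dir_deriv D UNIV c x) (at_right 0)"
proof -
  have "eventually (\<lambda>t. \<forall>i. \<bar>(c + t *\<^sub>R x) \<bullet> column i D\<bar> = \<bar>c \<bullet> column i D\<bar> +
      t * (if c \<bullet> column i D = 0 then \<bar>x \<bullet> column i D\<bar>
           else sgn (c \<bullet> column i D) * (x \<bullet> column i D))) (at_right 0)"
    by (intro eventually_all_finite allI) (simp add: inner_add_left eventually_abs_add_mult_at_right)
  then show ?thesis
    by eventually_elim (simp add: l1obj_def l1_dir_deriv_def sum.distrib sum_distrib_left)
qed

lemma l1_dir_deriv_nonneg_if_min_along_ray:
  assumes "\<And>t. t > 0 \<Longrightarrow> l1obj D c \<le> l1obj D (c + t *\<^sub>R x)"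
  shows "0 \<le> l1_dir_deriv D UNIV c x"
proof -
  have "eventually (\<lambda>t. t > 0 \<and> 0 \<le> t * l1_dir_deriv D UNIV c x) (at_right (0::real))"
    using eventually_l1obj_add_scaleR[of D c x] eventually_at_right_less[of 0]
    by eventually_elim (use assms in force)
  then obtain t :: real where "t > 0" "0 \<le> t * l1_dir_deriv D UNIV c x"
    using eventually_happens' trivial_limit_at_right_real by blast
  then show ?thesis by (simp add: zero_le_mult_iff)
qed

lemma l1_dir_deriv_add_scaleR_self:
  "l1_dir_deriv D S c (x + s *\<^sub>R c) = l1_dir_deriv D S c x + s * (\<Sum>i\<in>S. \<bar>c \<bullet> column i D\<bar>)"
  unfolding l1_dir_deriv_def sum_distrib_left sum.distrib[symmetric]
  by (rule sum.cong) (auto simp: inner_add_left algebra_simps sgn_if)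

lemma l1_dir_deriv_ge_at_argmin:
  assumes "subspace V" and c: "c \<in> argmin_set (\<lambda>c. c \<bullet> d = 1 \<and> c \<in> V) (l1obj D)"
    and "x \<in> V"
  shows "(d \<bullet> x) * l1obj D c \<le> l1_dir_deriv D UNIV c x"
proof -
  have "c \<bullet> d = 1" "c \<in> V"
    and min: "\<And>c'. c' \<bullet> d = 1 \<Longrightarrow> c' \<in> V \<Longrightarrow> l1obj D c \<le> l1obj D c'"
    using c by (auto simp: argmin_set_def)
  define w where "w = x - (d \<bullet> x) *\<^sub>R c"
  have "w \<in> V"
    using \<open>subspace V\<close> \<open>x \<in> V\<close> \<open>c \<in> V\<close> by (simp add: w_def subspace_diff subspace_scale)
  have "w \<bullet> d = 0"
    using \<open>c \<bullet> d = 1\<close> by (simp add: w_def inner_diff_left inner_commute[of x])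
  have "0 \<le> l1_dir_deriv D UNIV c w"
  proof (rule l1_dir_deriv_nonneg_if_min_along_ray, rule min)
    fix t :: real
    show "(c + t *\<^sub>R w) \<bullet> d = 1"
      using \<open>c \<bullet> d = 1\<close> \<open>w \<bullet> d = 0\<close> by (simp add: inner_add_left)
    show "c + t *\<^sub>R w \<in> V"
      using \<open>subspace V\<close> \<open>w \<in> V\<close> \<open>c \<in> V\<close> by (simp add: subspace_add subspace_scale)
  qed
  moreover have "l1_dir_deriv D UNIV c x = l1_dir_deriv D UNIV c w + (d \<bullet> x) * l1obj D c"
    using l1_dir_deriv_add_scaleR_self[of D UNIV c w "d \<bullet> x"] by (simp add: w_def l1obj_def)
  ultimately show ?thesis by simp
qed

lemma l1_dir_deriv_UNIV_eq_Compl: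
  assumes "\<And>i. i \<in> A \<Longrightarrow> c \<bullet> column i D = 0 \<and> x \<bullet> column i D = 0"
  shows "l1_dir_deriv D UNIV c x = l1_dir_deriv D (- A) c x"
proof -
  have "l1_dir_deriv D UNIV c x = l1_dir_deriv D (- A) c x + l1_dir_deriv D A c x"
    by (simp add: l1_dir_deriv_def sum.subset_diff[of A UNIV] Compl_eq_Diff_UNIV)
  also have "l1_dir_deriv D A c x = 0"
    using assms by (simp add: l1_dir_deriv_def)
  finally show ?thesis by simp
qed

lemma l1_dir_deriv_eq:
  "l1_dir_deriv D S c x = sgn_col_sum D S c \<bullet> x + (\<Sum>i\<in>zero_cols D S c. \<bar>x \<bullet> column i D\<bar>)"
  unfolding l1_dir_deriv_def sgn_col_sum_def zero_cols_def inner_sum_left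
    sum.inter_filter[OF finite] sum.distrib[symmetric]
  by (rule sum.cong) (auto simp: inner_commute)

lemma l1_dir_deriv_le_sum_abs: "l1_dir_deriv D S c x \<le> (\<Sum>i\<in>S. \<bar>x \<bullet> column i D\<bar>)"
  unfolding l1_dir_deriv_def by (rule sum_mono) (auto simp: sgn_if)

lemma l1_dir_deriv_add_ge:
  "l1_dir_deriv D S c x + sgn_col_sum D S c \<bullet> y - (\<Sum>i\<in>zero_cols D S c. \<bar>y \<bullet> column i D\<bar>)
     \<le> l1_dir_deriv D S c (x + y)"
proof -
  have "(\<Sum>i\<in>zero_cols D S c. \<bar>x \<bullet> column i D\<bar> - \<bar>y \<bullet> column i D\<bar>)
      \<le> (\<Sum>i\<in>zero_cols D S c. \<bar>(x + y) \<bullet> column i D\<bar>)"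
    by (rule sum_mono) (simp add: inner_add_left abs_triangle_ineq4)
  then show ?thesis
    by (simp add: l1_dir_deriv_eq inner_add_right sum_subtractf)
qed

lemma l1obj_eq_sum_add_sum_Compl:
  "l1obj D c = (\<Sum>i\<in>A. \<bar>c \<bullet> column i D\<bar>) + (\<Sum>i\<in>- A. \<bar>c \<bullet> column i D\<bar>)"
  by (simp add: l1obj_def sum.subset_diff[of A UNIV] Compl_eq_Diff_UNIV)

lemma l1_dir_deriv_ge_at_argmin_perpspace:
  fixes D :: "real^'n^'m" and U :: "real^'r^'m" and Inl :: "'n set"
  assumes inliers: "\<forall>i\<in>Inl. column i D \<in> colspace U"
    and chat: "chat \<in> argmin_set (\<lambda>c. c \<bullet> d = 1 \<and> c \<in> perpspace U) (l1obj D)"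
    and "x \<in> perpspace U"
  shows "(d \<bullet> x) * l1obj D chat \<le> l1_dir_deriv D (- Inl) chat x"
proof -
  have "chat \<in> perpspace U"
    using chat by (simp add: argmin_set_def)
  have "(d \<bullet> x) * l1obj D chat \<le> l1_dir_deriv D UNIV chat x"
    by (rule l1_dir_deriv_ge_at_argmin[OF subspace_perpspace chat \<open>x \<in> perpspace U\<close>])
  also have "\<dots> = l1_dir_deriv D (- Inl) chat x"
    using inliers \<open>chat \<in> perpspace U\<close> \<open>x \<in> perpspace U\<close>
    by (intro l1_dir_deriv_UNIV_eq_Compl) (simp add: perpspace_def)
  finally show ?thesis .
qed

lemma l1obj_add_colspace_ge:
  fixes D :: "real^'n^'m" and U :: "real^'r^'m" and Inl :: "'n set"
  assumes orth: "transpose U ** U = mat 1"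
    and inliers: "\<forall>i\<in>Inl. column i D \<in> colspace U"
    and "x \<in> perpspace U" and "\<delta> \<in> colspace U"
  shows "l1_dir_deriv D (- Inl) c x
      + norm \<delta> * (l1_Inf_sphere D Inl (colspace U) - l1_Sup_sphere D (zero_cols D (- Inl) c) (colspace U)
                  - norm (transpose U *v sgn_col_sum D (- Inl) c))
      \<le> l1obj D (x + \<delta>)"
proof -
  have "(\<Sum>i\<in>Inl. \<bar>(x + \<delta>) \<bullet> column i D\<bar>) = (\<Sum>i\<in>Inl. \<bar>\<delta> \<bullet> column i D\<bar>)"
    using inliers \<open>x \<in> perpspace U\<close> by (intro sum.cong) (auto simp: perpspace_def inner_add_left)
  moreover have "norm \<delta> * l1_Inf_sphere D Inl (colspace U) \<le> (\<Sum>i\<in>Inl. \<bar>\<delta> \<bullet> column i D\<bar>)"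
    by (rule norm_mult_l1_Inf_sphere_le[OF subspace_colspace \<open>\<delta> \<in> colspace U\<close>])
  moreover have "(\<Sum>i\<in>zero_cols D (- Inl) c. \<bar>\<delta> \<bullet> column i D\<bar>)
      \<le> norm \<delta> * l1_Sup_sphere D (zero_cols D (- Inl) c) (colspace U)"
    by (rule sum_abs_le_norm_mult_l1_Sup_sphere[OF subspace_colspace \<open>\<delta> \<in> colspace U\<close>])
  moreover have "- (norm \<delta> * norm (transpose U *v sgn_col_sum D (- Inl) c)) \<le> sgn_col_sum D (- Inl) c \<bullet> \<delta>"
  proof -
    obtain q where "\<delta> = U *v q"
      using \<open>\<delta> \<in> colspace U\<close> by (auto simp: colspace_def)
    then show ?thesis
      using abs_inner_mult_orthonormal_cols_le[OF orth, of "sgn_col_sum D (- Inl) c" q]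
      by (simp add: abs_le_iff)
  qed
  moreover have "l1_dir_deriv D (- Inl) c x + sgn_col_sum D (- Inl) c \<bullet> \<delta>
      - (\<Sum>i\<in>zero_cols D (- Inl) c. \<bar>\<delta> \<bullet> column i D\<bar>) \<le> (\<Sum>i\<in>- Inl. \<bar>(x + \<delta>) \<bullet> column i D\<bar>)"
    using l1_dir_deriv_add_ge l1_dir_deriv_le_sum_abs order_trans by blast
  ultimately show ?thesis
    using l1obj_eq_sum_add_sum_Compl[of D "x + \<delta>" Inl] by (simp add: algebra_simps)
qed

lemma l1obj_argmin_lt_outside_perpspace:
  fixes D :: "real^'n^'m" and U :: "real^'r^'m" and Inl :: "'n set"
  assumes orth: "transpose U ** U = mat 1"
    and inliers: "\<forall>i\<in>Inl. column i D \<in> colspace U"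
    and chat: "chat \<in> argmin_set (\<lambda>c. c \<bullet> d = 1 \<and> c \<in> perpspace U) (l1obj D)"
    and margin: "norm (transpose U *v d) * l1obj D chat
        + l1_Sup_sphere D (zero_cols D (- Inl) chat) (colspace U)
        + norm (transpose U *v sgn_col_sum D (- Inl) chat) < l1_Inf_sphere D Inl (colspace U)"
    and "c \<bullet> d = 1" and "c \<notin> perpspace U"
  shows "l1obj D chat < l1obj D c"
proof -
  define F where "F = l1obj D chat"
  define \<delta> where "\<delta> = U *v (transpose U *v c)"
  define x where "x = c - \<delta>"
  define gap where "gap = l1_Inf_sphere D Inl (colspace U) - l1_Sup_sphere D (zero_cols D (- Inl) chat) (colspace U)
                          - norm (transpose U *v sgn_col_sum D (- Inl) chat)"
  have "x \<in> perpspace U"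
    unfolding x_def \<delta>_def by (rule residual_in_perpspace[OF orth])
  have "\<delta> \<in> colspace U"
    by (simp add: \<delta>_def colspace_def)
  have "\<delta> \<noteq> 0"
    using \<open>c \<notin> perpspace U\<close> \<open>x \<in> perpspace U\<close> by (auto simp: x_def)
  have "(d \<bullet> x) * F + norm \<delta> * gap \<le> l1obj D c"
    using l1_dir_deriv_ge_at_argmin_perpspace[OF inliers chat \<open>x \<in> perpspace U\<close>]
      l1obj_add_colspace_ge[OF orth inliers \<open>x \<in> perpspace U\<close> \<open>\<delta> \<in> colspace U\<close>, of chat]
    by (simp add: F_def gap_def x_def)
  moreover have "(d \<bullet> \<delta>) * F \<le> norm \<delta> * norm (transpose U *v d) * F"
    using abs_inner_mult_orthonormal_cols_le[OF orth, of d "transpose U *v c"] F_def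
    by (intro mult_right_mono) (auto simp: \<delta>_def l1obj_def sum_nonneg)
  moreover have "d \<bullet> x = 1 - d \<bullet> \<delta>"
    using \<open>c \<bullet> d = 1\<close> by (simp add: x_def inner_diff_right inner_commute)
  moreover have "norm \<delta> * (norm (transpose U *v d) * F) < norm \<delta> * gap"
    using margin \<open>\<delta> \<noteq> 0\<close> by (simp add: F_def gap_def)
  ultimately show ?thesis
    unfolding F_def[symmetric] by (simp add: left_diff_distrib mult.assoc)
qed

theorem lemma9:
  fixes D :: "real^'n^'m" and U :: "real^'r^'m"
    and Inl :: "'n set" and j :: 'n and chat :: "real^'m"
  assumes orth: "transpose U ** U = mat 1"
    and inliers: "\<forall>i\<in>Inl. column i D \<in> colspace U"
    and outliers: "\<forall>i. i \<notin> Inl \<longrightarrow> column i D \<notin> colspace U"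
    and unit: "\<forall>i. norm (column i D) = 1"
    and jout: "j \<notin> Inl"
    and copt: "chat \<in> argmin_set (\<lambda>c. c \<bullet> column j D = 1 \<and> c \<in> perpspace U) (l1obj D)"
    and cond1: "let I0 = {i. i \<notin> Inl \<and> chat \<bullet> column i D = 0};
                    ov = (\<Sum>i\<in>-Inl. sgn (chat \<bullet> column i D) *\<^sub>R column i D)
                in (1/2) * Inf ((\<lambda>\<delta>. \<Sum>i\<in>Inl. \<bar>\<delta> \<bullet> column i D\<bar>) ` {\<delta>\<in>colspace U. norm \<delta> = 1})
                   > Sup ((\<lambda>\<delta>. \<Sum>i\<in>I0. \<bar>\<delta> \<bullet> column i D\<bar>) ` {\<delta>\<in>colspace U. norm \<delta> = 1})
                     + norm (transpose U *v ov)"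
    and cond2: "let d = column j D;
                    I0 = {i. i \<notin> Inl \<and> chat \<bullet> column i D = 0};
                    ov = (\<Sum>i\<in>-Inl. sgn (chat \<bullet> column i D) *\<^sub>R column i D);
                    r = d - U *v (transpose U *v d);
                    dperp = (1 / norm r) *\<^sub>R r;
                    a = norm (transpose U *v d)
                in Inf ((\<lambda>\<delta>. \<Sum>i\<in>Inl. \<bar>\<delta> \<bullet> column i D\<bar>) ` {\<delta>\<in>colspace U. norm \<delta> = 1})
                   > (2 * a / sqrt (1 - a^2)) * (ov \<bullet> dperp + (\<Sum>i\<in>I0. \<bar>column i D \<bullet> dperp\<bar>))"
  shows "argmin_set (\<lambda>c. c \<in> perpspace U \<and> column j D \<bullet> c = 1) (l1obj D)
       = argmin_set (\<lambda>c. column j D \<bullet> c = 1) (l1obj D)"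
proof -
  define d where "d = column j D"
  define F where "F = l1obj D chat"
  define a where "a = norm (transpose U *v d)"
  have chat: "chat \<in> argmin_set (\<lambda>c. c \<bullet> d = 1 \<and> c \<in> perpspace U) (l1obj D)"
    using copt by (simp add: d_def)
  have d: "norm d = 1" "d \<notin> colspace U"
    using unit outliers jout by (simp_all add: d_def)
  have I0: "zero_cols D (- Inl) chat = {i. i \<notin> Inl \<and> chat \<bullet> column i D = 0}"
    by (auto simp: zero_cols_def)
  have "sqrt (1 - a^2) * F \<le> l1_dir_deriv D (- Inl) chat (unit_residual U d)"
    using l1_dir_deriv_ge_at_argmin_perpspace[OF inliers chat unit_residual_in_perpspace[OF orth d]]
    by (simp add: inner_unit_residual[OF orth d] F_def a_def)
  then have "a * (sqrt (1 - a^2) * F) \<le> a * l1_dir_deriv D (- Inl) chat (unit_residual U d)"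
    by (rule mult_left_mono) (simp add: a_def)
  with sqrt_one_minus_norm_transpose_pos[OF orth d]
  have "2 * a * F \<le> (2 * a / sqrt (1 - a^2)) * l1_dir_deriv D (- Inl) chat (unit_residual U d)"
    by (simp add: a_def field_simps)
  then have "a * F + l1_Sup_sphere D (zero_cols D (- Inl) chat) (colspace U)
      + norm (transpose U *v sgn_col_sum D (- Inl) chat) < l1_Inf_sphere D Inl (colspace U)"
    using cond1 cond2 unfolding Let_def l1_dir_deriv_eq I0 l1_Inf_sphere_def l1_Sup_sphere_def
      sgn_col_sum_def unit_residual_def d_def[symmetric] a_def[symmetric]
    by (simp add: inner_commute)
  then have "F < l1obj D c" if "c \<bullet> d = 1" "c \<notin> perpspace U" for c
    using l1obj_argmin_lt_outside_perpspace[OF orth inliers chat _ that] by (simp add: F_def a_def)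
  then show ?thesis
    using argmin_set_eq_if_strict_outside[OF chat] by (simp add: F_def d_def inner_commute conj_commute)
qed

end
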